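(* Let $S$ be a semigroup and $a\in S$ an idempotent with $aSa\subseteq\operatorname{Reg}(S)$. Put $P=\{x\in Sa: x\,\mathscr L\,ax\}$ and $\phi:P\to aSa$, $x\mapsto ax$. Then $$\operatorname{MI}(Sa)=\operatorname{RI}(Sa)=\operatorname{MI}(P)=\operatorname{RI}(P)=V_P(a)=V(a)\cap P=V(a)\cap Sa=V(a)a=E(\widehat H^a_a)=a\phi^{-1}.$$
   Context: For a semigroup $T$: $\operatorname{RI}(T)$ is the set of right identities ($u$ with $xu=x$ for all $x\in T$); $\operatorname{MI}(T)$ is the set of mid-identities ($u$ with $xy=xuy$ for all $x,y\in T$); $E(T)$ is the set of idempotents. $V(a)=\{y\in S: a=aya,\ y=yay\}$ and $V_P(a)=\{y\in P: a=aya,\ y=yay\}$. $\widehat H^a_a=\{x\in P: ax \text{ is } \mathscr H\text{-related to } a \text{ in the monoid } aSa\}$. $\mathscr L$ is Green's relation on $S$. *)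

theory Defs
  imports Main
begin

text \<open>The semigroup S is the whole of a type of class semigroup_mult.
  Subsemigroups T are represented as subsets of that type.\<close>

definition right_ids :: "'a::semigroup_mult set \<Rightarrow> 'a set" ("RI") where
  "RI T = {u \<in> T. \<forall>x\<in>T. x * u = x}"

definition mid_ids :: "'a::semigroup_mult set \<Rightarrow> 'a set" ("MI") where
  "MI T = {u \<in> T. \<forall>x\<in>T. \<forall>y\<in>T. x * y = x * u * y}"

definition idems :: "'a::semigroup_mult set \<Rightarrow> 'a set" ("E") where
  "E T = {u \<in> T. u * u = u}"

definition Reg :: "'a::semigroup_mult set" where
  "Reg = {x. \<exists>y. x = x * y * x}"

text \<open>Green's L, R, H relations computed inside a subsemigroup M (via M^1).\<close>
definition greenL_in :: "'a::semigroup_mult set \<Rightarrow> 'a \<Rightarrow> 'a \<Rightarrow> bool" where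
  "greenL_in M x y \<longleftrightarrow> (x = y \<or> (\<exists>s\<in>M. x = s * y)) \<and> (y = x \<or> (\<exists>t\<in>M. y = t * x))"

definition greenR_in :: "'a::semigroup_mult set \<Rightarrow> 'a \<Rightarrow> 'a \<Rightarrow> bool" where
  "greenR_in M x y \<longleftrightarrow> (x = y \<or> (\<exists>s\<in>M. x = y * s)) \<and> (y = x \<or> (\<exists>t\<in>M. y = x * t))"

definition greenH_in :: "'a::semigroup_mult set \<Rightarrow> 'a \<Rightarrow> 'a \<Rightarrow> bool" where
  "greenH_in M x y \<longleftrightarrow> greenL_in M x y \<and> greenR_in M x y"

definition greenL :: "'a::semigroup_mult \<Rightarrow> 'a \<Rightarrow> bool" where
  "greenL x y \<longleftrightarrow> greenL_in UNIV x y"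

definition Sa :: "'a::semigroup_mult \<Rightarrow> 'a set" where
  "Sa a = {s * a | s. True}"

definition aSa :: "'a::semigroup_mult \<Rightarrow> 'a set" where
  "aSa a = {a * s * a | s. True}"

definition Pset :: "'a::semigroup_mult \<Rightarrow> 'a set" where
  "Pset a = {x \<in> Sa a. greenL x (a * x)}"

definition inv_set :: "'a::semigroup_mult \<Rightarrow> 'a set" ("V") where
  "V a = {y. a = a * y * a \<and> y = y * a * y}"

definition inv_set_P :: "'a::semigroup_mult \<Rightarrow> 'a set" ("V\<^sub>P") where
  "V\<^sub>P a = {y \<in> Pset a. a = a * y * a \<and> y = y * a * y}"

definition Hhat :: "'a::semigroup_mult \<Rightarrow> 'a set" where
  "Hhat a = {x \<in> Pset a. greenH_in (aSa a) (a * x) a}"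

definition phi :: "'a::semigroup_mult \<Rightarrow> 'a \<Rightarrow> 'a" where
  "phi a x = a * x"

end

theory Submission
  imports Defs
begin

text \<open>Every one of the ten sets equals \<open>L_idems a\<close>, the set of idempotents \<open>L\<close>-related to
  \<open>a\<close>, i.e. of the \<open>x\<close> with \<open>x a = x\<close> and \<open>a x = a\<close>. Such an \<open>x\<close> is a right identity for every \<open>y \<in> Sa\<close>, since
  \<open>y x = y a x = y a = y\<close>; conversely a mid-identity \<open>u\<close> of any subsemigroup of \<open>Sa\<close> containing
  \<open>a\<close> gives \<open>a = a u a = a u\<close>.\<close>

definition L_idems :: "'a::semigroup_mult \<Rightarrow> 'a set" where
  "L_idems a = {x. x * a = x \<and> a * x = a}"

lemma Sa_iff:
  fixes a :: "'a::semigroup_mult"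
  assumes "a * a = a"
  shows "x \<in> Sa a \<longleftrightarrow> x * a = x"
proof
  assume "x \<in> Sa a"
  then obtain s where "x = s * a" by (auto simp: Sa_def)
  then show "x * a = x" using assms by (simp add: mult.assoc)
next
  assume "x * a = x"
  then show "x \<in> Sa a" unfolding Sa_def by (blast dest: sym)
qed

lemma Pset_subset_Sa: "Pset a \<subseteq> Sa a"
  by (auto simp: Pset_def)

lemma L_idems_right_id:
  assumes "u \<in> L_idems a" and "x * a = x"
  shows "x * u = x"
proof -
  have "x * u = x * (a * u)" using assms(2) by (metis mult.assoc)
  also have "\<dots> = x" using assms by (simp add: L_idems_def)
  finally show ?thesis .
qed

lemma L_idems_idem:
  assumes "u \<in> L_idems a"
  shows "u * u = u"
  using L_idems_right_id[OF assms] assms by (simp add: L_idems_def)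

lemma L_idems_subset_Pset:
  fixes a :: "'a::semigroup_mult"
  assumes "a * a = a"
  shows "L_idems a \<subseteq> Pset a"
proof
  fix x assume "x \<in> L_idems a"
  then have xa: "x * a = x" and ax: "a * x = a" by (simp_all add: L_idems_def)
  have "greenL x (a * x)"
    unfolding greenL_def greenL_in_def ax using xa[symmetric] ax[symmetric] by blast
  with xa show "x \<in> Pset a" by (simp add: Pset_def Sa_iff[OF assms])
qed

lemma RI_eq_L_idems:
  assumes "a \<in> T" and "\<And>x. x \<in> T \<Longrightarrow> x * a = x" and "L_idems a \<subseteq> T"
  shows "RI T = L_idems a"
proof
  show "RI T \<subseteq> L_idems a"
    using assms(1,2) by (auto simp: right_ids_def L_idems_def)
  show "L_idems a \<subseteq> RI T"
  proof
    fix u assume "u \<in> L_idems a"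
    then have "u \<in> T" and "\<forall>x\<in>T. x * u = x"
      using assms(2,3) L_idems_right_id by blast+
    then show "u \<in> RI T" by (simp add: right_ids_def)
  qed
qed

lemma MI_eq_L_idems:
  assumes "a * a = a"
    and "a \<in> T" and "\<And>x. x \<in> T \<Longrightarrow> x * a = x" and "L_idems a \<subseteq> T"
  shows "MI T = L_idems a"
proof
  show "MI T \<subseteq> L_idems a"
  proof
    fix u assume "u \<in> MI T"
    then have "u \<in> T" and "\<forall>x\<in>T. \<forall>y\<in>T. x * y = x * u * y"
      unfolding mid_ids_def by blast+
    then have ua: "u * a = u" and mid: "a * a = a * u * a"
      using assms(2,3) by blast+
    have "a * u = a * u * a" using ua by (simp add: mult.assoc)
    also have "\<dots> = a * a" by (rule mid[symmetric])
    also have "\<dots> = a" by (rule assms(1))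
    finally show "u \<in> L_idems a" using ua by (simp add: L_idems_def)
  qed
  show "L_idems a \<subseteq> MI T"
  proof
    fix u assume u: "u \<in> L_idems a"
    have "\<forall>x\<in>T. \<forall>y\<in>T. x * y = x * u * y"
      using L_idems_right_id[OF u] assms(3) by simp
    moreover have "u \<in> T" using u assms(4) by blast
    ultimately show "u \<in> MI T" unfolding mid_ids_def by blast
  qed
qed

lemma times_in_L_idems:
  fixes a :: "'a::semigroup_mult"
  assumes "a * a = a" and "y \<in> V a"
  shows "y * a \<in> L_idems a"
proof -
  have "y * a * a = y * a" using assms(1) by (simp add: mult.assoc)
  moreover have "a * (y * a) = a" using assms(2) by (simp add: inv_set_def mult.assoc)
  ultimately show ?thesis by (simp add: L_idems_def)
qed

lemma L_idems_subset_V: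
  fixes a :: "'a::semigroup_mult"
  assumes "a * a = a"
  shows "L_idems a \<subseteq> V a"
proof
  fix y assume y: "y \<in> L_idems a"
  then have ay: "a * y = a" by (simp add: L_idems_def)
  have "a * y * a = a" using ay assms by simp
  moreover have "y * a * y = y"
    using L_idems_idem[OF y] y by (simp add: L_idems_def)
  ultimately show "y \<in> V a" by (simp add: inv_set_def)
qed

lemma V_inter_Sa_eq_L_idems:
  fixes a :: "'a::semigroup_mult"
  assumes "a * a = a"
  shows "V a \<inter> Sa a = L_idems a"
proof
  show "V a \<inter> Sa a \<subseteq> L_idems a"
    using times_in_L_idems[OF assms] Sa_iff[OF assms] by fastforce
  show "L_idems a \<subseteq> V a \<inter> Sa a"
    using L_idems_subset_V[OF assms] Sa_iff[OF assms] by (auto simp: L_idems_def)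
qed

lemma V_inter_Pset_eq_L_idems:
  fixes a :: "'a::semigroup_mult"
  assumes "a * a = a"
  shows "V a \<inter> Pset a = L_idems a"
  using V_inter_Sa_eq_L_idems[OF assms] L_idems_subset_Pset[OF assms] Pset_subset_Sa by blast

lemma V_P_eq_V_inter_Pset: "V\<^sub>P a = V a \<inter> Pset a"
  by (auto simp: inv_set_P_def inv_set_def)

lemma V_times_eq_L_idems:
  fixes a :: "'a::semigroup_mult"
  assumes "a * a = a"
  shows "(\<lambda>y. y * a) ` V a = L_idems a"
proof
  show "(\<lambda>y. y * a) ` V a \<subseteq> L_idems a"
    using times_in_L_idems[OF assms] by blast
  show "L_idems a \<subseteq> (\<lambda>y. y * a) ` V a"
  proof
    fix x assume "x \<in> L_idems a"
    then have "x \<in> V a" and "x = x * a"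
      using L_idems_subset_V[OF assms] by (auto simp: L_idems_def)
    then show "x \<in> (\<lambda>y. y * a) ` V a" by blast
  qed
qed

lemma idems_Hhat_eq_L_idems:
  fixes a :: "'a::semigroup_mult"
  assumes "a * a = a"
  shows "E (Hhat a) = L_idems a"
proof
  show "E (Hhat a) \<subseteq> L_idems a"
  proof
    fix x assume "x \<in> E (Hhat a)"
    then have xP: "x \<in> Pset a" and xx: "x * x = x" and H: "greenH_in (aSa a) (a * x) a"
      by (auto simp: idems_def Hhat_def)
    have "a * x = a"
    proof (cases "a = a * x")
      case False
      then obtain t where t: "a = t * (a * x)"
        using H by (auto simp: greenH_in_def greenL_in_def)
      from t have "a * x = t * (a * x) * x" by (rule arg_cong[where f = "\<lambda>z. z * x"])
      also have "\<dots> = t * (a * (x * x))" by (simp add: mult.assoc)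
      also have "\<dots> = t * (a * x)" using xx by simp
      also have "\<dots> = a" by (rule t[symmetric])
      finally show ?thesis .
    qed simp
    moreover have "x * a = x" using xP Pset_subset_Sa Sa_iff[OF assms] by blast
    ultimately show "x \<in> L_idems a" by (simp add: L_idems_def)
  qed
  show "L_idems a \<subseteq> E (Hhat a)"
  proof
    fix x assume x: "x \<in> L_idems a"
    then have "a * x = a" by (simp add: L_idems_def)
    then have "greenH_in (aSa a) (a * x) a"
      by (simp add: greenH_in_def greenL_in_def greenR_in_def)
    with x show "x \<in> E (Hhat a)"
      using L_idems_subset_Pset[OF assms] L_idems_idem by (auto simp: idems_def Hhat_def)
  qed
qed

lemma phi_fibre_eq_L_idems:
  fixes a :: "'a::semigroup_mult"
  assumes "a * a = a"
  shows "{x \<in> Pset a. phi a x = a} = L_idems a"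
  using L_idems_subset_Pset[OF assms] Pset_subset_Sa Sa_iff[OF assms]
  by (auto simp: phi_def L_idems_def)

theorem proposition3p23:
  fixes a :: "'a::semigroup_mult"
  assumes "a * a = a"
    and "aSa a \<subseteq> Reg"
  shows "MI (Sa a) = RI (Sa a)
       \<and> RI (Sa a) = MI (Pset a)
       \<and> MI (Pset a) = RI (Pset a)
       \<and> RI (Pset a) = V\<^sub>P a
       \<and> V\<^sub>P a = V a \<inter> Pset a
       \<and> V a \<inter> Pset a = V a \<inter> Sa a
       \<and> V a \<inter> Sa a = (\<lambda>y. y * a) ` V a
       \<and> (\<lambda>y. y * a) ` V a = E (Hhat a)
       \<and> E (Hhat a) = {x \<in> Pset a. phi a x = a}"
proof -
  have Sa_right: "\<And>x. x \<in> Sa a \<Longrightarrow> x * a = x"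
    and Pset_right: "\<And>x. x \<in> Pset a \<Longrightarrow> x * a = x"
    using Sa_iff[OF assms(1)] Pset_subset_Sa by blast+
  have a_in_Pset: "a \<in> Pset a"
    using L_idems_subset_Pset[OF assms(1)] assms(1) by (auto simp: L_idems_def)
  have L_idems_Sa: "L_idems a \<subseteq> Sa a"
    using L_idems_subset_Pset[OF assms(1)] Pset_subset_Sa by blast
  note Sa_facts = Pset_subset_Sa[THEN subsetD, OF a_in_Pset] Sa_right L_idems_Sa
  note Pset_facts = a_in_Pset Pset_right L_idems_subset_Pset[OF assms(1)]
  show ?thesis
    using RI_eq_L_idems[OF Sa_facts] MI_eq_L_idems[OF assms(1) Sa_facts]
      RI_eq_L_idems[OF Pset_facts] MI_eq_L_idems[OF assms(1) Pset_facts]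
      V_P_eq_V_inter_Pset[of a] V_inter_Pset_eq_L_idems[OF assms(1)]
      V_inter_Sa_eq_L_idems[OF assms(1)] V_times_eq_L_idems[OF assms(1)]
      idems_Hhat_eq_L_idems[OF assms(1)] phi_fibre_eq_L_idems[OF assms(1)]
    by simp
qed

end
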